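(* In the root system $B_n$, every quartet $\{r_1, r, s, s_1\}$ is a mono-quartet, i.e. the vectors $s - r_1$ and $r - r_1$ are never both roots.
   Context: Fix simple roots of $B_n$; the height of a root is the sum of its coefficients in the simple roots. The regular ordering $\prec$ of positive roots orders them by height, and roots of equal height lexicographically by coefficient vectors. An ordered pair $\{r,s\}$ of positive roots is special if $r+s\in\varPhi$ and $0\prec r\prec s$; a special pair $\{r_1,s_1\}$ is extraspecial if $r_1 \preceq r$ for every special pair $\{r,s\}$ with $r+s=r_1+s_1$. A quartet is an ordered set $\{r_1,r,s,s_1\}$ where $\{r_1,s_1\}$ is extraspecial, $\{r,s\}$ is a special, non-extraspecial pair with $r+s=r_1+s_1$, and $0\prec r_1\prec r\prec s\prec s_1$. *)

theory Defs
  imports Main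
begin

text \<open>Root system B_n, realised in Z^n with standard basis e_0,...,e_(n-1)
  (vectors are functions nat => int, zero outside {0..<n}).\<close>

definition unitv :: "nat \<Rightarrow> nat \<Rightarrow> int" where
  "unitv i = (\<lambda>k. if k = i then 1 else 0)"

definition vadd :: "(nat \<Rightarrow> int) \<Rightarrow> (nat \<Rightarrow> int) \<Rightarrow> nat \<Rightarrow> int" where
  "vadd u v = (\<lambda>k. u k + v k)"

definition vsub :: "(nat \<Rightarrow> int) \<Rightarrow> (nat \<Rightarrow> int) \<Rightarrow> nat \<Rightarrow> int" where
  "vsub u v = (\<lambda>k. u k - v k)"

definition rootsB :: "nat \<Rightarrow> (nat \<Rightarrow> int) set" where
  "rootsB n =
     {v. \<exists>i<n. \<exists>a::int. a \<in> {1, -1} \<and> v = (\<lambda>k. a * unitv i k)}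
   \<union> {v. \<exists>i<n. \<exists>j<n. i < j \<and> (\<exists>a b::int. a \<in> {1, -1} \<and> b \<in> {1, -1} \<and>
          v = (\<lambda>k. a * unitv i k + b * unitv j k))}"

definition simple_root :: "nat \<Rightarrow> nat \<Rightarrow> nat \<Rightarrow> int" where
  "simple_root n k = (if k + 1 < n then vsub (unitv k) (unitv (k + 1)) else unitv k)"

text \<open>Coefficient of v at the simple root alpha_k: since e_i = alpha_i + ... + alpha_(n-1),
  v = sum_k (sum_(i<=k) v_i) alpha_k.\<close>

definition coef :: "(nat \<Rightarrow> int) \<Rightarrow> nat \<Rightarrow> int" where
  "coef v k = (\<Sum>i\<le>k. v i)"

definition height :: "nat \<Rightarrow> (nat \<Rightarrow> int) \<Rightarrow> int" where
  "height n v = (\<Sum>k<n. coef v k)"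

definition positive_root :: "nat \<Rightarrow> (nat \<Rightarrow> int) \<Rightarrow> bool" where
  "positive_root n v \<longleftrightarrow> v \<in> rootsB n \<and> (\<forall>k<n. coef v k \<ge> 0)"

definition lex_less :: "nat \<Rightarrow> (nat \<Rightarrow> int) \<Rightarrow> (nat \<Rightarrow> int) \<Rightarrow> bool" where
  "lex_less n u v \<longleftrightarrow> (\<exists>k<n. (\<forall>j<k. coef u j = coef v j) \<and> coef u k < coef v k)"

definition reg_less :: "nat \<Rightarrow> (nat \<Rightarrow> int) \<Rightarrow> (nat \<Rightarrow> int) \<Rightarrow> bool" where
  "reg_less n u v \<longleftrightarrow> height n u < height n v \<or> (height n u = height n v \<and> lex_less n u v)"

definition special :: "nat \<Rightarrow> (nat \<Rightarrow> int) \<Rightarrow> (nat \<Rightarrow> int) \<Rightarrow> bool" where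
  "special n r s \<longleftrightarrow> positive_root n r \<and> positive_root n s \<and> vadd r s \<in> rootsB n \<and> reg_less n r s"

definition extraspecial :: "nat \<Rightarrow> (nat \<Rightarrow> int) \<Rightarrow> (nat \<Rightarrow> int) \<Rightarrow> bool" where
  "extraspecial n r1 s1 \<longleftrightarrow> special n r1 s1 \<and>
     (\<forall>r s. special n r s \<and> vadd r s = vadd r1 s1 \<longrightarrow> r1 = r \<or> reg_less n r1 r)"

definition quartet :: "nat \<Rightarrow> (nat \<Rightarrow> int) \<Rightarrow> (nat \<Rightarrow> int) \<Rightarrow> (nat \<Rightarrow> int) \<Rightarrow> (nat \<Rightarrow> int) \<Rightarrow> bool" where
  "quartet n r1 r s s1 \<longleftrightarrow> extraspecial n r1 s1 \<and> special n r s \<and> \<not> extraspecial n r s \<and>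
     vadd r s = vadd r1 s1 \<and> positive_root n r1 \<and>
     reg_less n r1 r \<and> reg_less n r s \<and> reg_less n s s1"

definition mono_quartet :: "nat \<Rightarrow> (nat \<Rightarrow> int) \<Rightarrow> (nat \<Rightarrow> int) \<Rightarrow> (nat \<Rightarrow> int) \<Rightarrow> (nat \<Rightarrow> int) \<Rightarrow> bool" where
  "mono_quartet n r1 r s s1 \<longleftrightarrow> \<not> (vsub s r1 \<in> rootsB n \<and> vsub r r1 \<in> rootsB n)"

end

theory Submission
  imports Defs
begin

text \<open>All roots of \<open>B\<^sub>n\<close> have squared length 1 or 2. If \<open>r\<^sub>1, r, s, r + s, r - r\<^sub>1, s - r\<^sub>1\<close>
  and \<open>s\<^sub>1 = r + s - r\<^sub>1\<close> were all roots, then, since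
  \<open>|a - b|\<^sup>2 = |a|\<^sup>2 + |b|\<^sup>2 - 2(a,b)\<close>, the squared lengths of \<open>r - r\<^sub>1\<close>, \<open>s - r\<^sub>1\<close> and
  \<open>r + s\<close> would be fixed by parity (2 if both summands have the same length, 1 otherwise), and
  the identity
  \<open>|r + s - r\<^sub>1|\<^sup>2 = |r + s|\<^sup>2 + |r - r\<^sub>1|\<^sup>2 + |s - r\<^sub>1|\<^sup>2 - |r|\<^sup>2 - |s|\<^sup>2 - |r\<^sub>1|\<^sup>2\<close>
  would give \<open>|s\<^sub>1|\<^sup>2 \<in> {3, 0, -1, 0}\<close> according as 0, 1, 2 or 3 of \<open>r\<^sub>1, r, s\<close> are long.\<close>

definition dot :: "nat \<Rightarrow> (nat \<Rightarrow> int) \<Rightarrow> (nat \<Rightarrow> int) \<Rightarrow> int" where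
  "dot n u v = (\<Sum>k<n. u k * v k)"

lemma dot_commute: "dot n u v = dot n v u"
  unfolding dot_def by (simp add: mult.commute)

lemma dot_vadd_left: "dot n (vadd u v) w = dot n u w + dot n v w"
  unfolding dot_def vadd_def by (simp add: distrib_right sum.distrib)

lemma dot_vsub_left: "dot n (vsub u v) w = dot n u w - dot n v w"
  unfolding dot_def vsub_def by (simp add: left_diff_distrib sum_subtractf)

lemma dot_vadd_right: "dot n w (vadd u v) = dot n w u + dot n w v"
  by (simp add: dot_commute[of n w] dot_vadd_left)

lemma dot_vsub_right: "dot n w (vsub u v) = dot n w u - dot n w v"
  by (simp add: dot_commute[of n w] dot_vsub_left)

lemmas dot_bilinear = dot_vadd_left dot_vsub_left dot_vadd_right dot_vsub_right

lemma dot_self_rootsB: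
  assumes "v \<in> rootsB n"
  shows "dot n v v \<in> {1, 2}"
proof -
  from assms consider
    (short) i a where "i < n" "a \<in> {1, -1}" "v = (\<lambda>k. a * unitv i k)"
  | (long) i j a b where "i < n" "j < n" "i < j" "a \<in> {1, -1}" "b \<in> {1, -1}"
      "v = (\<lambda>k. a * unitv i k + b * unitv j k)"
    unfolding rootsB_def by blast
  then show ?thesis
  proof cases
    case short
    have "dot n v v = (\<Sum>k<n. if k = i then a * a else 0)"
      unfolding dot_def short(3) by (intro sum.cong) (auto simp: unitv_def)
    also have "\<dots> = a * a" using short(1) by simp
    finally show ?thesis using short(2) by auto
  next
    case long
    have "dot n v v = (\<Sum>k<n. (if k = i then a * a else 0) + (if k = j then b * b else 0))"
      unfolding dot_def long(6) using long(3) by (intro sum.cong) (auto simp: unitv_def)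
    also have "\<dots> = a * a + b * b" using long(1,2) by (simp add: sum.distrib)
    finally show ?thesis using long(4,5) by auto
  qed
qed

lemma lengths_one_two_inconsistent:
  fixes U X Y p q t :: int
  assumes "U \<in> {1, 2}" "X \<in> {1, 2}" "Y \<in> {1, 2}" "X + 2 * t + Y \<in> {1, 2}"
    and "X - 2 * p + U \<in> {1, 2}" "Y - 2 * q + U \<in> {1, 2}"
  shows "X + Y + U + 2 * t - 2 * p - 2 * q \<notin> {1, 2}"
  using assms by simp presburger

lemma vsub_vadd_notin_rootsB:
  assumes "u \<in> rootsB n" "x \<in> rootsB n" "y \<in> rootsB n"
    and "vadd x y \<in> rootsB n" "vsub x u \<in> rootsB n" "vsub y u \<in> rootsB n"
  shows "vsub (vadd x y) u \<notin> rootsB n"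
proof -
  have expand:
    "dot n (vadd x y) (vadd x y) = dot n x x + 2 * dot n x y + dot n y y"
    "dot n (vsub x u) (vsub x u) = dot n x x - 2 * dot n x u + dot n u u"
    "dot n (vsub y u) (vsub y u) = dot n y y - 2 * dot n y u + dot n u u"
    "dot n (vsub (vadd x y) u) (vsub (vadd x y) u) =
       dot n x x + dot n y y + dot n u u + 2 * dot n x y - 2 * dot n x u - 2 * dot n y u"
    by (simp_all add: dot_bilinear dot_commute[of n u x] dot_commute[of n u y] dot_commute[of n y x])
  have "dot n (vsub (vadd x y) u) (vsub (vadd x y) u) \<notin> {1, 2}"
    unfolding expand(4)
    by (rule lengths_one_two_inconsistent)
      (use dot_self_rootsB[OF assms(4)] dot_self_rootsB[OF assms(5)] dot_self_rootsB[OF assms(6)]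
        in \<open>simp_all only: expand dot_self_rootsB assms\<close>)
  then show ?thesis
    using dot_self_rootsB by blast
qed

theorem mainTheorem3:
  fixes n :: nat and r1 r s s1 :: "nat \<Rightarrow> int"
  assumes "2 \<le> n"
    and "quartet n r1 r s s1"
  shows "mono_quartet n r1 r s s1"
proof -
  have roots: "r1 \<in> rootsB n" "r \<in> rootsB n" "s \<in> rootsB n" "s1 \<in> rootsB n"
      "vadd r s \<in> rootsB n"
    using assms(2) unfolding quartet_def extraspecial_def special_def positive_root_def by auto
  have "vadd r s = vadd r1 s1"
    using assms(2) unfolding quartet_def by blast
  then have "s1 = vsub (vadd r s) r1"
    by (simp add: fun_eq_iff vadd_def vsub_def)
  with roots show ?thesis
    unfolding mono_quartet_def using vsub_vadd_notin_rootsB by blast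
qed

end
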